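(* Every finite indecomposable non-degenerate solution $(X,r)$ of the Yang--Baxter equation with $|X|$ a prime number is simple.
   Context: A set-theoretic solution $(X,r)$: $X$ non-empty, $r\colon X\times X\to X\times X$ satisfying $(r\times\mathrm{id})(\mathrm{id}\times r)(r\times\mathrm{id})=(\mathrm{id}\times r)(r\times\mathrm{id})(\mathrm{id}\times r)$; write $r(x,y)=(\lambda_x(y),\rho_y(x))$; non-degenerate means $r$ bijective and all $\lambda_x,\rho_y$ bijective. $(X,r)$ is decomposable if $X=Y\cup Z$ with $Y,Z$ disjoint non-empty and $r(Y\times Y)\subseteq Y\times Y$, $r(Z\times Z)\subseteq Z\times Z$ with these restrictions being solutions; otherwise indecomposable. A morphism $f\colon(X,r)\to(Y,s)$ is a map with $(f\times f)r=s(f\times f)$; $(X,r)$ with $|X|>1$ is simple if every surjective morphism $(X,r)\to(Y,s)$ is bijective or has $|Y|=1$. *)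

theory Defs
  imports Main "HOL-Computational_Algebra.Primes"
begin

definition braid_rel :: "'a set \<Rightarrow> ('a \<times> 'a \<Rightarrow> 'a \<times> 'a) \<Rightarrow> bool" where
  "braid_rel X r \<longleftrightarrow>
     (\<forall>x\<in>X. \<forall>y\<in>X. \<forall>z\<in>X.
        (let r12 = (\<lambda>(a,b,c). (let (p,q) = r (a,b) in (p,q,c)));
             r23 = (\<lambda>(a,b,c). (let (p,q) = r (b,c) in (a,p,q)))
         in r12 (r23 (r12 (x,y,z))) = r23 (r12 (r23 (x,y,z)))))"

definition is_solution :: "'a set \<Rightarrow> ('a \<times> 'a \<Rightarrow> 'a \<times> 'a) \<Rightarrow> bool" where
  "is_solution X r \<longleftrightarrow> X \<noteq> {} \<and> r ` (X \<times> X) \<subseteq> X \<times> X \<and> braid_rel X r"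

(* r(x,y) = (lambda_x(y), rho_y(x)) *)
definition lam :: "('a \<times> 'a \<Rightarrow> 'a \<times> 'a) \<Rightarrow> 'a \<Rightarrow> 'a \<Rightarrow> 'a" where
  "lam r x y = fst (r (x, y))"

definition rho :: "('a \<times> 'a \<Rightarrow> 'a \<times> 'a) \<Rightarrow> 'a \<Rightarrow> 'a \<Rightarrow> 'a" where
  "rho r y x = snd (r (x, y))"

definition non_degenerate :: "'a set \<Rightarrow> ('a \<times> 'a \<Rightarrow> 'a \<times> 'a) \<Rightarrow> bool" where
  "non_degenerate X r \<longleftrightarrow>
     bij_betw r (X \<times> X) (X \<times> X) \<and>
     (\<forall>x\<in>X. bij_betw (lam r x) X X) \<and>
     (\<forall>y\<in>X. bij_betw (rho r y) X X)"

definition decomposable :: "'a set \<Rightarrow> ('a \<times> 'a \<Rightarrow> 'a \<times> 'a) \<Rightarrow> bool" where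
  "decomposable X r \<longleftrightarrow>
     (\<exists>Y Z. X = Y \<union> Z \<and> Y \<inter> Z = {} \<and> Y \<noteq> {} \<and> Z \<noteq> {} \<and>
        r ` (Y \<times> Y) \<subseteq> Y \<times> Y \<and> r ` (Z \<times> Z) \<subseteq> Z \<times> Z \<and>
        is_solution Y r \<and> is_solution Z r)"

definition indecomposable :: "'a set \<Rightarrow> ('a \<times> 'a \<Rightarrow> 'a \<times> 'a) \<Rightarrow> bool" where
  "indecomposable X r \<longleftrightarrow> \<not> decomposable X r"

definition sol_morphism :: "'a set \<Rightarrow> ('a \<times> 'a \<Rightarrow> 'a \<times> 'a) \<Rightarrow> 'b set \<Rightarrow> ('b \<times> 'b \<Rightarrow> 'b \<times> 'b)
    \<Rightarrow> ('a \<Rightarrow> 'b) \<Rightarrow> bool" where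
  "sol_morphism X r Y s f \<longleftrightarrow>
     f ` X \<subseteq> Y \<and>
     (\<forall>x\<in>X. \<forall>y\<in>X. map_prod f f (r (x, y)) = s (f x, f y))"

(* simplicity, testing against all solutions (Y,s) whose elements have type 'b;
   the theorem quantifies over all types 'b. *)
definition simple_sol :: "'b itself \<Rightarrow> 'a set \<Rightarrow> ('a \<times> 'a \<Rightarrow> 'a \<times> 'a) \<Rightarrow> bool" where
  "simple_sol _ X r \<longleftrightarrow>
     card X > 1 \<and>
     (\<forall>(Y::'b set) s f. is_solution Y s \<longrightarrow> sol_morphism X r Y s f \<longrightarrow> f ` X = Y \<longrightarrow>
         bij_betw f X Y \<or> card Y = 1)"

end

theory Submission
  imports Defs
begin

text \<open>
  Indecomposability of a finite non-degenerate solution means that the maps \<open>\<lambda>\<^sub>x\<close>, \<open>\<rho>\<^sub>x\<close>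
  act transitively on \<open>X\<close>: the orbit of a point and its complement (which is again
  invariant, the maps being permutations of a finite set) would otherwise decompose \<open>X\<close>.
  A morphism \<open>f\<close> is compatible with \<open>\<lambda>\<^sub>x\<close> and \<open>\<rho>\<^sub>x\<close>, so these injective maps send each
  fibre of \<open>f\<close> into another fibre; by transitivity all fibres have the same size.
  Hence \<open>|f(X)|\<close> divides the prime \<open>|X|\<close>, so \<open>f\<close> is either constant or a bijection.
\<close>

lemma lam_in: "is_solution X r \<Longrightarrow> x \<in> X \<Longrightarrow> y \<in> X \<Longrightarrow> lam r x y \<in> X"
  unfolding is_solution_def lam_def by (force simp: image_subset_iff mem_Times_iff)

lemma rho_in: "is_solution X r \<Longrightarrow> x \<in> X \<Longrightarrow> y \<in> X \<Longrightarrow> rho r x y \<in> X"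
  unfolding is_solution_def rho_def by (force simp: image_subset_iff mem_Times_iff)

lemma braid_rel_subset: "braid_rel X r \<Longrightarrow> Y \<subseteq> X \<Longrightarrow> braid_rel Y r"
  unfolding braid_rel_def by blast

lemma is_solution_invariant_subset:
  assumes "is_solution X r" "Y \<subseteq> X" "Y \<noteq> {}"
    and "\<And>x y. x \<in> Y \<Longrightarrow> y \<in> Y \<Longrightarrow> lam r x y \<in> Y \<and> rho r x y \<in> Y"
  shows "is_solution Y r" "r ` (Y \<times> Y) \<subseteq> Y \<times> Y"
proof -
  have "r (x, y) = (lam r x y, rho r y x)" for x y
    by (simp add: lam_def rho_def)
  then show "r ` (Y \<times> Y) \<subseteq> Y \<times> Y"
    using assms(4) by auto
  with assms(1-3) show "is_solution Y r"
    by (auto simp: is_solution_def intro: braid_rel_subset)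
qed

lemma bij_betw_invariant_complement:
  assumes "finite X" "bij_betw h X X" "A \<subseteq> X" "h ` A \<subseteq> A"
  shows "h ` (X - A) \<subseteq> X - A"
proof -
  have inj: "inj_on h X" and "h ` X = X"
    using assms(2) by (auto simp: bij_betw_def)
  moreover have "h ` A = A"
    using endo_inj_surj[OF finite_subset[OF assms(3,1)] assms(4) inj_on_subset[OF inj assms(3)]] .
  ultimately show ?thesis
    using inj_on_image_set_diff[OF inj _ assms(3)] by simp
qed

lemma indecomposable_invariant_subset_eq:
  assumes "finite X" "is_solution X r" "non_degenerate X r" "indecomposable X r"
    and A: "A \<subseteq> X" "A \<noteq> {}"
    and inv: "\<And>x y. x \<in> X \<Longrightarrow> y \<in> A \<Longrightarrow> lam r x y \<in> A \<and> rho r x y \<in> A"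
  shows "A = X"
proof (rule ccontr)
  assume "A \<noteq> X"
  with A have "X - A \<noteq> {}" by blast
  have "lam r x y \<in> X - A \<and> rho r x y \<in> X - A" if "x \<in> X" "y \<in> X - A" for x y
  proof -
    have "bij_betw (lam r x) X X" "bij_betw (rho r x) X X"
      using assms(3) that(1) by (auto simp: non_degenerate_def)
    moreover have "lam r x ` A \<subseteq> A" "rho r x ` A \<subseteq> A"
      using inv that(1) by auto
    ultimately show ?thesis
      using bij_betw_invariant_complement[OF assms(1) _ A(1)] that(2) by blast
  qed
  then have "is_solution (X - A) r" "r ` ((X - A) \<times> (X - A)) \<subseteq> (X - A) \<times> (X - A)"
    using is_solution_invariant_subset[OF assms(2) Diff_subset \<open>X - A \<noteq> {}\<close>] by auto
  moreover have "is_solution A r" "r ` (A \<times> A) \<subseteq> A \<times> A"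
    using is_solution_invariant_subset[OF assms(2) A] inv A(1) by auto
  ultimately have "decomposable X r"
    unfolding decomposable_def using A \<open>X - A \<noteq> {}\<close>
    by (intro exI[of _ A] exI[of _ "X - A"]) auto
  with assms(4) show False
    by (simp add: indecomposable_def)
qed

inductive_set lam_rho_orbit :: "'a set \<Rightarrow> ('a \<times> 'a \<Rightarrow> 'a \<times> 'a) \<Rightarrow> 'a \<Rightarrow> 'a set"
  for X r a
where
  base: "a \<in> lam_rho_orbit X r a"
| lam: "x \<in> X \<Longrightarrow> y \<in> lam_rho_orbit X r a \<Longrightarrow> lam r x y \<in> lam_rho_orbit X r a"
| rho: "x \<in> X \<Longrightarrow> y \<in> lam_rho_orbit X r a \<Longrightarrow> rho r x y \<in> lam_rho_orbit X r a"

lemma lam_rho_orbit_subset: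
  assumes "is_solution X r" "a \<in> X"
  shows "lam_rho_orbit X r a \<subseteq> X"
proof
  show "y \<in> X" if "y \<in> lam_rho_orbit X r a" for y
    using that by induction (use assms lam_in rho_in in auto)
qed

lemma indecomposable_lam_rho_orbit_eq:
  assumes "finite X" "is_solution X r" "non_degenerate X r" "indecomposable X r" "a \<in> X"
  shows "lam_rho_orbit X r a = X"
  using indecomposable_invariant_subset_eq[OF assms(1-4) lam_rho_orbit_subset[OF assms(2,5)]]
  by (blast intro: lam_rho_orbit.intros)

lemma sol_morphism_lam_rho_compatible:
  assumes "sol_morphism X r Y s f" "x \<in> X" "y \<in> X" "y' \<in> X" "f y = f y'"
  shows "f (lam r x y) = f (lam r x y')" "f (rho r x y) = f (rho r x y')"
proof -
  have hom: "map_prod f f (r (u, v)) = s (f u, f v)" if "u \<in> X" "v \<in> X" for u v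
    using assms(1) that by (simp add: sol_morphism_def)
  have "f (lam r x y) = fst (s (f x, f y))"
    using arg_cong[OF hom[OF assms(2,3)], of fst] by (simp add: lam_def)
  also have "\<dots> = f (lam r x y')"
    using arg_cong[OF hom[OF assms(2,4)], of fst] assms(5) by (simp add: lam_def)
  finally show "f (lam r x y) = f (lam r x y')" .
  have "f (rho r x y) = snd (s (f y, f x))"
    using arg_cong[OF hom[OF assms(3,2)], of snd] by (simp add: rho_def)
  also have "\<dots> = f (rho r x y')"
    using arg_cong[OF hom[OF assms(4,2)], of snd] assms(5) by (simp add: rho_def)
  finally show "f (rho r x y) = f (rho r x y')" .
qed

lemma card_fibre_le_compatible_image:
  assumes "finite X" "inj_on h X" "h ` X \<subseteq> X" "b \<in> X"
    and compat: "\<And>y y'. y \<in> X \<Longrightarrow> y' \<in> X \<Longrightarrow> f y = f y' \<Longrightarrow> f (h y) = f (h y')"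
  shows "card {y \<in> X. f y = f b} \<le> card {y \<in> X. f y = f (h b)}"
proof (rule card_inj_on_le)
  show "inj_on h {y \<in> X. f y = f b}"
    using assms(2) by (rule inj_on_subset) blast
  show "h ` {y \<in> X. f y = f b} \<subseteq> {y \<in> X. f y = f (h b)}"
    using assms(3,4) compat by blast
qed (use assms(1) in simp)

lemma card_fibre_le_lam_rho_orbit:
  assumes "finite X" "is_solution X r" "non_degenerate X r" "sol_morphism X r Y s f" "a \<in> X"
    and "b \<in> lam_rho_orbit X r a"
  shows "card {y \<in> X. f y = f a} \<le> card {y \<in> X. f y = f b}"
proof -
  have step: "card {z \<in> X. f z = f y} \<le> card {z \<in> X. f z = f (h y)}"
    if "h = lam r x \<or> h = rho r x" "x \<in> X" "y \<in> lam_rho_orbit X r a" for h x y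
  proof (rule card_fibre_le_compatible_image[OF assms(1)])
    have "bij_betw h X X"
      using that(1,2) assms(3) by (auto simp: non_degenerate_def)
    then show "inj_on h X" "h ` X \<subseteq> X"
      by (simp_all add: bij_betw_def)
    show "y \<in> X"
      using that(3) lam_rho_orbit_subset[OF assms(2,5)] by blast
    show "f (h u) = f (h u')" if "u \<in> X" "u' \<in> X" "f u = f u'" for u u'
      using sol_morphism_lam_rho_compatible[OF assms(4) \<open>x \<in> X\<close> that] \<open>h = lam r x \<or> h = rho r x\<close>
      by blast
  qed
  from assms(6) show ?thesis
  proof induction
    case (lam x y)
    with step[of "lam r x" x y] show ?case by simp
  next
    case (rho x y)
    with step[of "rho r x" x y] show ?case by simp
  qed simp
qed

lemma card_image_dvd_if_fibres_equicardinal: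
  assumes "finite X"
    and "\<And>a b. a \<in> X \<Longrightarrow> b \<in> X \<Longrightarrow> card {y \<in> X. f y = f a} = card {y \<in> X. f y = f b}"
  shows "card (f ` X) dvd card X"
proof (cases "X = {}")
  case False
  then obtain a where "a \<in> X" by blast
  have "card X = card (\<Union>c \<in> f ` X. {y \<in> X. f y = c})"
    by (rule arg_cong[where f = card]) blast
  also have "\<dots> = (\<Sum>c \<in> f ` X. card {y \<in> X. f y = c})"
  proof (rule card_UN_disjoint)
    show "finite (f ` X)" using assms(1) by simp
    show "\<forall>c\<in>f ` X. finite {y \<in> X. f y = c}" using assms(1) by simp
  qed blast
  also have "\<dots> = (\<Sum>c \<in> f ` X. card {y \<in> X. f y = f a})"
  proof (rule sum.cong)
    fix c assume "c \<in> f ` X"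
    then obtain b where "b \<in> X" "c = f b" by blast
    then show "card {y \<in> X. f y = c} = card {y \<in> X. f y = f a}"
      using assms(2)[OF _ \<open>a \<in> X\<close>] by simp
  qed simp
  finally show ?thesis by simp
qed simp

theorem mainTheorem9:
  fixes X :: "'a set" and r :: "'a \<times> 'a \<Rightarrow> 'a \<times> 'a"
  assumes "finite X"
    and "is_solution X r"
    and "non_degenerate X r"
    and "indecomposable X r"
    and "prime (card X :: nat)"
  shows "simple_sol TYPE('b) X r"
  unfolding simple_sol_def
proof (intro conjI allI impI)
  show "card X > 1"
    using assms(5) prime_gt_1_nat by blast
  fix Y :: "'b set" and s f
  assume mor: "sol_morphism X r Y s f" and onto: "f ` X = Y"
  have fibre_le: "card {y \<in> X. f y = f a} \<le> card {y \<in> X. f y = f b}" if "a \<in> X" "b \<in> X" for a b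
    using card_fibre_le_lam_rho_orbit[OF assms(1-3) mor \<open>a \<in> X\<close>]
      indecomposable_lam_rho_orbit_eq[OF assms(1-4) \<open>a \<in> X\<close>] \<open>b \<in> X\<close> by blast
  have "card (f ` X) dvd card X"
    using fibre_le by (intro card_image_dvd_if_fibres_equicardinal[OF assms(1)] order_antisym)
  then have "card Y = 1 \<or> card Y = card X"
    using assms(5) onto prime_nat_iff by blast
  then show "bij_betw f X Y \<or> card Y = 1"
    using onto inj_on_iff_eq_card[OF assms(1), of f] by (auto simp: bij_betw_def)
qed

end
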